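(* Let $(X,I,T)$ be a relative monad and $(S,S_0)$ a monad compatible with $I$ in a 2-category $\mathcal{K}$, and let $\hat T$ be a lifting of $T$ to the algebras of $(S,S_0)$. Let $\widehat{m_0}\colon STS_0\Rightarrow TS_0$ be the $S$-algebra structure of $\hat T(S_0,m_0)$, where $(S_0,m_0)$ is regarded as an $X_0$-indexed $S_0$-algebra. Then $$d:=\widehat{m_0}\cdot STs_0\colon ST\Rightarrow TS_0$$ is a relative distributive law of $T$ over $(S,S_0)$.
   Context: Conventions: 1-cells compose by juxtaposition; vertical composition of 2-cells is written $\cdot$; whiskering by juxtaposition. Relative monad: a relative monad $(X,I,T)$ in $\mathcal{K}$ consists of objects $X_0,X$, 1-cells $I,T\colon X_0\to X$, an operator $(-)^\dagger\colon[I,T]\to[T,T]$ (extension: for every span $A,B\colon O\to X_0$ a function sending 2-cells $IA\Rightarrow TB$ to 2-cells $TA\Rightarrow TB$, natural in $O$, $A$ and $B$) and a 2-cell $t\colon I\Rightarrow T$ such that $k^\dagger\cdot tA=k$, $(tA)^\dagger=1_{TA}$, $(l^\dagger\cdot k)^\dagger=l^\dagger\cdot k^\dagger$ for all $k\colon IA\Rightarrow TB$, $l\colon IB\Rightarrow TC$. Monad compatible with $I\colon X_0\to X$: a pair $(S,S_0)$ of monads $(X,S,m,s)$ and $(X_0,S_0,m_0,s_0)$ in $\mathcal{K}$ with $SI=IS_0$, $mI=Im_0$, $sI=Is_0$. Relative distributive law: a 2-cell $d\colon ST\Rightarrow TS_0$ such that (D1) $d\cdot mT=Tm_0\cdot dS_0\cdot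 Sd$; (D2) $d\cdot sT=Ts_0$; (D3) for all $A,B\colon O\to X_0$ and $f\colon IA\Rightarrow TB$, $dB\cdot S(f^\dagger)=(dB\cdot Sf)^\dagger\cdot dA$ (here $dB\cdot Sf\colon IS_0A=SIA\Rightarrow TS_0B$); (D4) $d\cdot St=tS_0$ as 2-cells $SI=IS_0\Rightarrow TS_0$. Indexed algebras: for a monad $(X,S,m,s)$ and object $K$, $S\text{-}\mathrm{Alg}(K)$ is the category whose objects are pairs $(M,\mu)$ with $M\colon K\to X$, $\mu\colon SM\Rightarrow M$, $\mu\cdot sM=1_M$, $\mu\cdot S\mu=\mu\cdot mM$, and whose morphisms $(M,\mu)\to(N,\nu)$ are 2-cells $f\colon M\Rightarrow N$ with $f\cdot\mu=\nu\cdot Sf$; this gives a 2-functor $S\text{-}\mathrm{Alg}(-)\colon\mathcal{K}^{op}\to\mathbf{Cat}$ by precomposition. Lifting to algebras: a lifting of $T$ to the algebras of $(S,S_0)$ is a 2-natural transformation $\hat T\colon S_0\text{-}\mathrm{Alg}(-)\to S\text{-}\mathrm{Alg}(-)$ of the form $\hat T(M,\mu)=(TM,\hat T\mu)$ on objects and $\hat T(f)=Tf$ on morphisms, carrying the relative monad structure over $I_*\colon(M,\mu)\mapsto(IM,I\mu)$ whose unit and extension are those of $T$, which means precisely: (a) for all $K$-indexed $S_0$-algebras $(M,\mu),(N,\nu)$ and every 2-cell $f\colon IM\Rightarrow TN$ with $f\cdot I\mu=\hat T\nu\cdot Sf$, one has $f^\dagger\cdot\hat T\mu=\hat T\nu\cdot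 Sf^\dagger$; (b) for every $(M,\mu)$, $tM\cdot I\mu=\hat T\mu\cdot StM$. *)

theory Defs
  imports Main
begin

text \<open>A strict 2-category with objects of type 'o, 1-cells of type 'a and 2-cells of type 'c.
  cmp g f is the composite "g f" (first f, then g), matching juxtaposition.
  vcmp b a is vertical composition "b . a" (first a, then b).
  hcmp b a is horizontal composition "b a" (first a, then b in the 1-cell direction).\<close>

record ('o, 'a, 'c) twocat =
  obs  :: "'o set"
  arr1 :: "'a set"
  arr2 :: "'c set"
  dom1 :: "'a \<Rightarrow> 'o"
  cod1 :: "'a \<Rightarrow> 'o"
  idn  :: "'o \<Rightarrow> 'a"
  cmp  :: "'a \<Rightarrow> 'a \<Rightarrow> 'a"
  src2 :: "'c \<Rightarrow> 'a"
  tgt2 :: "'c \<Rightarrow> 'a"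
  id2  :: "'a \<Rightarrow> 'c"
  vcmp :: "'c \<Rightarrow> 'c \<Rightarrow> 'c"
  hcmp :: "'c \<Rightarrow> 'c \<Rightarrow> 'c"

definition hom1 :: "('o,'a,'c,'e) twocat_scheme \<Rightarrow> 'a \<Rightarrow> 'o \<Rightarrow> 'o \<Rightarrow> bool" where
  "hom1 C f x y \<longleftrightarrow> f \<in> arr1 C \<and> dom1 C f = x \<and> cod1 C f = y"

definition hom2 :: "('o,'a,'c,'e) twocat_scheme \<Rightarrow> 'c \<Rightarrow> 'a \<Rightarrow> 'a \<Rightarrow> bool" where
  "hom2 C \<alpha> f g \<longleftrightarrow> \<alpha> \<in> arr2 C \<and> src2 C \<alpha> = f \<and> tgt2 C \<alpha> = g"

text \<open>Whiskering: wl C F a is "F a", wr C a F is "a F".\<close>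
definition wl :: "('o,'a,'c,'e) twocat_scheme \<Rightarrow> 'a \<Rightarrow> 'c \<Rightarrow> 'c" where
  "wl C F \<alpha> = hcmp C (id2 C F) \<alpha>"

definition wr :: "('o,'a,'c,'e) twocat_scheme \<Rightarrow> 'c \<Rightarrow> 'a \<Rightarrow> 'c" where
  "wr C \<alpha> F = hcmp C \<alpha> (id2 C F)"

definition two_category :: "('o,'a,'c,'e) twocat_scheme \<Rightarrow> bool" where
  "two_category C \<longleftrightarrow>
     \<comment> \<open>1-cells form a category\<close>
     (\<forall>f \<in> arr1 C. dom1 C f \<in> obs C \<and> cod1 C f \<in> obs C) \<and>
     (\<forall>x \<in> obs C. hom1 C (idn C x) x x) \<and>
     (\<forall>f \<in> arr1 C. \<forall>g \<in> arr1 C. dom1 C g = cod1 C f \<longrightarrow>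
        hom1 C (cmp C g f) (dom1 C f) (cod1 C g)) \<and>
     (\<forall>f \<in> arr1 C. \<forall>g \<in> arr1 C. \<forall>h \<in> arr1 C. dom1 C g = cod1 C f \<longrightarrow> dom1 C h = cod1 C g \<longrightarrow>
        cmp C (cmp C h g) f = cmp C h (cmp C g f)) \<and>
     (\<forall>f \<in> arr1 C. cmp C (idn C (cod1 C f)) f = f \<and> cmp C f (idn C (dom1 C f)) = f) \<and>
     \<comment> \<open>2-cells: well-typedness\<close>
     (\<forall>\<alpha> \<in> arr2 C. src2 C \<alpha> \<in> arr1 C \<and> tgt2 C \<alpha> \<in> arr1 C \<and>
        dom1 C (src2 C \<alpha>) = dom1 C (tgt2 C \<alpha>) \<and> cod1 C (src2 C \<alpha>) = cod1 C (tgt2 C \<alpha>)) \<and>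
     (\<forall>f \<in> arr1 C. hom2 C (id2 C f) f f) \<and>
     \<comment> \<open>vertical composition\<close>
     (\<forall>\<alpha> \<in> arr2 C. \<forall>\<beta> \<in> arr2 C. src2 C \<beta> = tgt2 C \<alpha> \<longrightarrow>
        hom2 C (vcmp C \<beta> \<alpha>) (src2 C \<alpha>) (tgt2 C \<beta>)) \<and>
     (\<forall>\<alpha> \<in> arr2 C. \<forall>\<beta> \<in> arr2 C. \<forall>\<gamma> \<in> arr2 C. src2 C \<beta> = tgt2 C \<alpha> \<longrightarrow> src2 C \<gamma> = tgt2 C \<beta> \<longrightarrow>
        vcmp C (vcmp C \<gamma> \<beta>) \<alpha> = vcmp C \<gamma> (vcmp C \<beta> \<alpha>)) \<and>
     (\<forall>\<alpha> \<in> arr2 C. vcmp C (id2 C (tgt2 C \<alpha>)) \<alpha> = \<alpha> \<and> vcmp C \<alpha> (id2 C (src2 C \<alpha>)) = \<alpha>) \<and>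
     \<comment> \<open>horizontal composition\<close>
     (\<forall>\<alpha> \<in> arr2 C. \<forall>\<beta> \<in> arr2 C. dom1 C (src2 C \<beta>) = cod1 C (src2 C \<alpha>) \<longrightarrow>
        hom2 C (hcmp C \<beta> \<alpha>) (cmp C (src2 C \<beta>) (src2 C \<alpha>)) (cmp C (tgt2 C \<beta>) (tgt2 C \<alpha>))) \<and>
     (\<forall>\<alpha> \<in> arr2 C. \<forall>\<beta> \<in> arr2 C. \<forall>\<gamma> \<in> arr2 C.
        dom1 C (src2 C \<beta>) = cod1 C (src2 C \<alpha>) \<longrightarrow> dom1 C (src2 C \<gamma>) = cod1 C (src2 C \<beta>) \<longrightarrow>
        hcmp C (hcmp C \<gamma> \<beta>) \<alpha> = hcmp C \<gamma> (hcmp C \<beta> \<alpha>)) \<and>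
     (\<forall>\<alpha> \<in> arr2 C. hcmp C (id2 C (idn C (cod1 C (src2 C \<alpha>)))) \<alpha> = \<alpha> \<and>
                    hcmp C \<alpha> (id2 C (idn C (dom1 C (src2 C \<alpha>)))) = \<alpha>) \<and>
     (\<forall>f \<in> arr1 C. \<forall>g \<in> arr1 C. dom1 C g = cod1 C f \<longrightarrow>
        hcmp C (id2 C g) (id2 C f) = id2 C (cmp C g f)) \<and>
     \<comment> \<open>interchange law\<close>
     (\<forall>\<alpha> \<in> arr2 C. \<forall>\<alpha>' \<in> arr2 C. \<forall>\<beta> \<in> arr2 C. \<forall>\<beta>' \<in> arr2 C.
        src2 C \<alpha>' = tgt2 C \<alpha> \<longrightarrow> src2 C \<beta>' = tgt2 C \<beta> \<longrightarrow> dom1 C (src2 C \<beta>) = cod1 C (src2 C \<alpha>) \<longrightarrow>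
        hcmp C (vcmp C \<beta>' \<beta>) (vcmp C \<alpha>' \<alpha>) = vcmp C (hcmp C \<beta>' \<alpha>') (hcmp C \<beta> \<alpha>))"

text \<open>ext A B f is the extension f^dagger of a 2-cell f : I A => T B, for a span A, B : Ob -> X0.\<close>

definition relative_monad ::
  "('o,'a,'c,'e) twocat_scheme \<Rightarrow> 'o \<Rightarrow> 'o \<Rightarrow> 'a \<Rightarrow> 'a \<Rightarrow> ('a \<Rightarrow> 'a \<Rightarrow> 'c \<Rightarrow> 'c) \<Rightarrow> 'c \<Rightarrow> bool" where
  "relative_monad C X0 X I T ext t \<longleftrightarrow>
     X0 \<in> obs C \<and> X \<in> obs C \<and> hom1 C I X0 X \<and> hom1 C T X0 X \<and> hom2 C t I T \<and>
     \<comment> \<open>typing of the extension operator\<close>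
     (\<forall>Ob A B f. hom1 C A Ob X0 \<longrightarrow> hom1 C B Ob X0 \<longrightarrow> hom2 C f (cmp C I A) (cmp C T B) \<longrightarrow>
        hom2 C (ext A B f) (cmp C T A) (cmp C T B)) \<and>
     \<comment> \<open>naturality in Ob\<close>
     (\<forall>Ob Ob' A B f G. hom1 C A Ob X0 \<longrightarrow> hom1 C B Ob X0 \<longrightarrow> hom2 C f (cmp C I A) (cmp C T B) \<longrightarrow>
        hom1 C G Ob' Ob \<longrightarrow>
        ext (cmp C A G) (cmp C B G) (wr C f G) = wr C (ext A B f) G) \<and>
     \<comment> \<open>naturality in A\<close>
     (\<forall>Ob A A' B f \<alpha>. hom1 C A Ob X0 \<longrightarrow> hom1 C A' Ob X0 \<longrightarrow> hom1 C B Ob X0 \<longrightarrow>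
        hom2 C f (cmp C I A) (cmp C T B) \<longrightarrow> hom2 C \<alpha> A' A \<longrightarrow>
        ext A' B (vcmp C f (wl C I \<alpha>)) = vcmp C (ext A B f) (wl C T \<alpha>)) \<and>
     \<comment> \<open>naturality in B\<close>
     (\<forall>Ob A B B' f \<beta>. hom1 C A Ob X0 \<longrightarrow> hom1 C B Ob X0 \<longrightarrow> hom1 C B' Ob X0 \<longrightarrow>
        hom2 C f (cmp C I A) (cmp C T B) \<longrightarrow> hom2 C \<beta> B B' \<longrightarrow>
        ext A B' (vcmp C (wl C T \<beta>) f) = vcmp C (wl C T \<beta>) (ext A B f)) \<and>
     \<comment> \<open>relative monad laws\<close>
     (\<forall>Ob A B k. hom1 C A Ob X0 \<longrightarrow> hom1 C B Ob X0 \<longrightarrow> hom2 C k (cmp C I A) (cmp C T B) \<longrightarrow>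
        vcmp C (ext A B k) (wr C t A) = k) \<and>
     (\<forall>Ob A. hom1 C A Ob X0 \<longrightarrow> ext A A (wr C t A) = id2 C (cmp C T A)) \<and>
     (\<forall>Ob A B D k l. hom1 C A Ob X0 \<longrightarrow> hom1 C B Ob X0 \<longrightarrow> hom1 C D Ob X0 \<longrightarrow>
        hom2 C k (cmp C I A) (cmp C T B) \<longrightarrow> hom2 C l (cmp C I B) (cmp C T D) \<longrightarrow>
        ext A D (vcmp C (ext B D l) k) = vcmp C (ext B D l) (ext A B k))"

definition monad2 :: "('o,'a,'c,'e) twocat_scheme \<Rightarrow> 'o \<Rightarrow> 'a \<Rightarrow> 'c \<Rightarrow> 'c \<Rightarrow> bool" where
  "monad2 C X S m s \<longleftrightarrow>
     X \<in> obs C \<and> hom1 C S X X \<and> hom2 C m (cmp C S S) S \<and> hom2 C s (idn C X) S \<and>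
     vcmp C m (wr C m S) = vcmp C m (wl C S m) \<and>
     vcmp C m (wr C s S) = id2 C S \<and>
     vcmp C m (wl C S s) = id2 C S"

definition compatible_monad ::
  "('o,'a,'c,'e) twocat_scheme \<Rightarrow> 'o \<Rightarrow> 'o \<Rightarrow> 'a \<Rightarrow> 'a \<Rightarrow> 'c \<Rightarrow> 'c \<Rightarrow> 'a \<Rightarrow> 'c \<Rightarrow> 'c \<Rightarrow> bool" where
  "compatible_monad C X0 X I S m s S0 m0 s0 \<longleftrightarrow>
     monad2 C X S m s \<and> monad2 C X0 S0 m0 s0 \<and>
     cmp C S I = cmp C I S0 \<and> wr C m I = wl C I m0 \<and> wr C s I = wl C I s0"

definition ialg :: "('o,'a,'c,'e) twocat_scheme \<Rightarrow> 'o \<Rightarrow> 'a \<Rightarrow> 'c \<Rightarrow> 'c \<Rightarrow> 'a \<Rightarrow> 'c \<Rightarrow> bool" where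
  "ialg C X S m s M \<mu> \<longleftrightarrow>
     M \<in> arr1 C \<and> cod1 C M = X \<and> hom2 C \<mu> (cmp C S M) M \<and>
     vcmp C \<mu> (wr C s M) = id2 C M \<and>
     vcmp C \<mu> (wl C S \<mu>) = vcmp C \<mu> (wr C m M)"

text \<open>hatT M mu is the S-algebra structure of hatT(M,mu) = (T M, hatT M mu).\<close>

definition lifting ::
  "('o,'a,'c,'e) twocat_scheme \<Rightarrow> 'o \<Rightarrow> 'o \<Rightarrow> 'a \<Rightarrow> 'a \<Rightarrow> ('a \<Rightarrow> 'a \<Rightarrow> 'c \<Rightarrow> 'c) \<Rightarrow> 'c \<Rightarrow>
   'a \<Rightarrow> 'c \<Rightarrow> 'c \<Rightarrow> 'a \<Rightarrow> 'c \<Rightarrow> 'c \<Rightarrow> ('a \<Rightarrow> 'c \<Rightarrow> 'c) \<Rightarrow> bool" where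
  "lifting C X0 X I T ext t S m s S0 m0 s0 hatT \<longleftrightarrow>
     \<comment> \<open>on objects: S0-algebras go to S-algebras (T M, hatT M mu)\<close>
     (\<forall>M \<mu>. ialg C X0 S0 m0 s0 M \<mu> \<longrightarrow> ialg C X S m s (cmp C T M) (hatT M \<mu>)) \<and>
     \<comment> \<open>on morphisms: f goes to T f\<close>
     (\<forall>M \<mu> N \<nu> f. ialg C X0 S0 m0 s0 M \<mu> \<longrightarrow> ialg C X0 S0 m0 s0 N \<nu> \<longrightarrow> dom1 C M = dom1 C N \<longrightarrow>
        hom2 C f M N \<longrightarrow> vcmp C f \<mu> = vcmp C \<nu> (wl C S0 f) \<longrightarrow>
        vcmp C (wl C T f) (hatT M \<mu>) = vcmp C (hatT N \<nu>) (wl C S (wl C T f))) \<and>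
     \<comment> \<open>2-naturality (in the indexing object K)\<close>
     (\<forall>M \<mu> A K'. ialg C X0 S0 m0 s0 M \<mu> \<longrightarrow> hom1 C A K' (dom1 C M) \<longrightarrow>
        hatT (cmp C M A) (wr C \<mu> A) = wr C (hatT M \<mu>) A) \<and>
     \<comment> \<open>(a) extension lifts\<close>
     (\<forall>M \<mu> N \<nu> f. ialg C X0 S0 m0 s0 M \<mu> \<longrightarrow> ialg C X0 S0 m0 s0 N \<nu> \<longrightarrow> dom1 C M = dom1 C N \<longrightarrow>
        hom2 C f (cmp C I M) (cmp C T N) \<longrightarrow>
        vcmp C f (wl C I \<mu>) = vcmp C (hatT N \<nu>) (wl C S f) \<longrightarrow>
        vcmp C (ext M N f) (hatT M \<mu>) = vcmp C (hatT N \<nu>) (wl C S (ext M N f))) \<and>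
     \<comment> \<open>(b) unit lifts\<close>
     (\<forall>M \<mu>. ialg C X0 S0 m0 s0 M \<mu> \<longrightarrow>
        vcmp C (wr C t M) (wl C I \<mu>) = vcmp C (hatT M \<mu>) (wl C S (wr C t M)))"

definition rel_distributive_law ::
  "('o,'a,'c,'e) twocat_scheme \<Rightarrow> 'o \<Rightarrow> 'o \<Rightarrow> 'a \<Rightarrow> 'a \<Rightarrow> ('a \<Rightarrow> 'a \<Rightarrow> 'c \<Rightarrow> 'c) \<Rightarrow> 'c \<Rightarrow>
   'a \<Rightarrow> 'c \<Rightarrow> 'c \<Rightarrow> 'a \<Rightarrow> 'c \<Rightarrow> 'c \<Rightarrow> 'c \<Rightarrow> bool" where
  "rel_distributive_law C X0 X I T ext t S m s S0 m0 s0 d \<longleftrightarrow>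
     hom2 C d (cmp C S T) (cmp C T S0) \<and>
     \<comment> \<open>(D1)\<close>
     vcmp C d (wr C m T) = vcmp C (wl C T m0) (vcmp C (wr C d S0) (wl C S d)) \<and>
     \<comment> \<open>(D2)\<close>
     vcmp C d (wr C s T) = wl C T s0 \<and>
     \<comment> \<open>(D3)\<close>
     (\<forall>Ob A B f. hom1 C A Ob X0 \<longrightarrow> hom1 C B Ob X0 \<longrightarrow> hom2 C f (cmp C I A) (cmp C T B) \<longrightarrow>
        vcmp C (wr C d B) (wl C S (ext A B f)) =
        vcmp C (ext (cmp C S0 A) (cmp C S0 B) (vcmp C (wr C d B) (wl C S f))) (wr C d A)) \<and>
     \<comment> \<open>(D4)\<close>
     vcmp C d (wl C S t) = wr C t S0"

end

theory Submission
  imports Defs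
begin

text \<open>
  Write \<open>\<hat>m\<^sub>0\<close> for the \<open>S\<close>-algebra structure of \<open>\<hat>T(S\<^sub>0, m\<^sub>0)\<close>, so that
  \<open>d = \<hat>m\<^sub>0 \<cdot> S(Ts\<^sub>0)\<close>, and whiskering \<open>d\<close> by \<open>A\<close> gives the same
  formula for the free algebra \<open>(S\<^sub>0A, m\<^sub>0A)\<close> by 2-naturality of the lifting.
  (D2) is the unit law of the algebra \<open>\<hat>m\<^sub>0\<close> and (D4) is the lifting of the unit.
  (D1) follows from the associativity of \<open>\<hat>m\<^sub>0\<close> together with the fact that
  \<open>\<hat>T\<close> sends the algebra map \<open>m\<^sub>0 : (S\<^sub>0S\<^sub>0, m\<^sub>0S\<^sub>0) \<rightarrow> (S\<^sub>0, m\<^sub>0)\<close>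
  to an algebra map. For (D3), given \<open>f : IA \<Rightarrow> TB\<close>, the 2-cell
  \<open>g = dB \<cdot> Sf : IS\<^sub>0A \<Rightarrow> TS\<^sub>0B\<close> is compatible with the free algebra
  structures, so by the lifting of the extension \<open>g\<^sup>\<dagger>\<close> commutes with them;
  since \<open>g \<cdot> Is\<^sub>0A = Ts\<^sub>0B \<cdot> f\<close>, naturality of the extension identifies both
  sides of (D3) with \<open>\<hat>m\<^sub>0B \<cdot> S(g\<^sup>\<dagger> \<cdot> Ts\<^sub>0A)\<close>.
\<close>

locale two_cat =
  fixes C :: "('o,'a,'c,'e) twocat_scheme"
  assumes two_category: "two_category C"
begin

lemmas two_category_unfolded = two_category[unfolded two_category_def hom1_def hom2_def]

lemma idn_hom1 [simp]:
  "x \<in> obs C \<Longrightarrow> idn C x \<in> arr1 C"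
  "x \<in> obs C \<Longrightarrow> dom1 C (idn C x) = x" "x \<in> obs C \<Longrightarrow> cod1 C (idn C x) = x"
  using two_category_unfolded by meson+

lemma cmp_hom1 [simp]:
  assumes "f \<in> arr1 C" "g \<in> arr1 C" "dom1 C g = cod1 C f"
  shows "cmp C g f \<in> arr1 C" "dom1 C (cmp C g f) = dom1 C f" "cod1 C (cmp C g f) = cod1 C g"
  using two_category_unfolded assms by meson+

lemma cmp_assoc [simp]:
  "\<lbrakk>f \<in> arr1 C; g \<in> arr1 C; h \<in> arr1 C; dom1 C g = cod1 C f; dom1 C h = cod1 C g\<rbrakk> \<Longrightarrow>
   cmp C (cmp C h g) f = cmp C h (cmp C g f)"
  using two_category_unfolded by meson

lemma cmp_idn [simp]:
  "\<lbrakk>f \<in> arr1 C; cod1 C f = y\<rbrakk> \<Longrightarrow> cmp C (idn C y) f = f"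
  "\<lbrakk>f \<in> arr1 C; dom1 C f = x\<rbrakk> \<Longrightarrow> cmp C f (idn C x) = f"
  using two_category_unfolded by meson+

lemma src2_tgt2_hom1 [simp]:
  assumes "a \<in> arr2 C"
  shows "src2 C a \<in> arr1 C" "tgt2 C a \<in> arr1 C"
    "dom1 C (tgt2 C a) = dom1 C (src2 C a)" "cod1 C (tgt2 C a) = cod1 C (src2 C a)"
  using two_category_unfolded assms by metis+

lemma id2_hom2 [simp]:
  "f \<in> arr1 C \<Longrightarrow> id2 C f \<in> arr2 C"
  "f \<in> arr1 C \<Longrightarrow> src2 C (id2 C f) = f" "f \<in> arr1 C \<Longrightarrow> tgt2 C (id2 C f) = f"
  using two_category_unfolded by meson+

lemma vcmp_hom2 [simp]:
  assumes "a \<in> arr2 C" "b \<in> arr2 C" "src2 C b = tgt2 C a"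
  shows "vcmp C b a \<in> arr2 C" "src2 C (vcmp C b a) = src2 C a" "tgt2 C (vcmp C b a) = tgt2 C b"
  using two_category_unfolded assms by meson+

lemma vcmp_assoc:
  "\<lbrakk>a \<in> arr2 C; b \<in> arr2 C; c \<in> arr2 C; src2 C b = tgt2 C a; src2 C c = tgt2 C b\<rbrakk> \<Longrightarrow>
   vcmp C (vcmp C c b) a = vcmp C c (vcmp C b a)"
  using two_category_unfolded by meson

lemma vcmp_id2 [simp]:
  "\<lbrakk>a \<in> arr2 C; tgt2 C a = g\<rbrakk> \<Longrightarrow> vcmp C (id2 C g) a = a"
  "\<lbrakk>a \<in> arr2 C; src2 C a = f\<rbrakk> \<Longrightarrow> vcmp C a (id2 C f) = a"
  using two_category_unfolded by meson+

lemma hcmp_hom2 [simp]: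
  assumes "a \<in> arr2 C" "b \<in> arr2 C" "dom1 C (src2 C b) = cod1 C (src2 C a)"
  shows "hcmp C b a \<in> arr2 C"
    "src2 C (hcmp C b a) = cmp C (src2 C b) (src2 C a)"
    "tgt2 C (hcmp C b a) = cmp C (tgt2 C b) (tgt2 C a)"
  using two_category_unfolded assms by meson+

lemma hcmp_assoc:
  "\<lbrakk>a \<in> arr2 C; b \<in> arr2 C; c \<in> arr2 C; dom1 C (src2 C b) = cod1 C (src2 C a);
    dom1 C (src2 C c) = cod1 C (src2 C b)\<rbrakk> \<Longrightarrow> hcmp C (hcmp C c b) a = hcmp C c (hcmp C b a)"
  using two_category_unfolded by meson

lemma hcmp_id2_idn:
  "a \<in> arr2 C \<Longrightarrow> hcmp C (id2 C (idn C (cod1 C (src2 C a)))) a = a"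
  "a \<in> arr2 C \<Longrightarrow> hcmp C a (id2 C (idn C (dom1 C (src2 C a)))) = a"
  using two_category_unfolded by meson+

lemma hcmp_id2:
  "\<lbrakk>f \<in> arr1 C; g \<in> arr1 C; dom1 C g = cod1 C f\<rbrakk> \<Longrightarrow>
   hcmp C (id2 C g) (id2 C f) = id2 C (cmp C g f)"
  using two_category_unfolded by meson

lemma interchange:
  "\<lbrakk>a \<in> arr2 C; a' \<in> arr2 C; b \<in> arr2 C; b' \<in> arr2 C; src2 C a' = tgt2 C a; src2 C b' = tgt2 C b;
    dom1 C (src2 C b) = cod1 C (src2 C a)\<rbrakk> \<Longrightarrow>
   hcmp C (vcmp C b' b) (vcmp C a' a) = vcmp C (hcmp C b' a') (hcmp C b a)"
  using two_category_unfolded by meson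

lemma wl_hom2 [simp]:
  assumes "F \<in> arr1 C" "a \<in> arr2 C" "dom1 C F = cod1 C (src2 C a)"
  shows "wl C F a \<in> arr2 C" "src2 C (wl C F a) = cmp C F (src2 C a)"
    "tgt2 C (wl C F a) = cmp C F (tgt2 C a)"
  using assms unfolding wl_def by simp_all

lemma wr_hom2 [simp]:
  assumes "F \<in> arr1 C" "a \<in> arr2 C" "dom1 C (src2 C a) = cod1 C F"
  shows "wr C a F \<in> arr2 C" "src2 C (wr C a F) = cmp C (src2 C a) F"
    "tgt2 C (wr C a F) = cmp C (tgt2 C a) F"
  using assms unfolding wr_def by simp_all

lemma wl_vcmp:
  "\<lbrakk>F \<in> arr1 C; a \<in> arr2 C; b \<in> arr2 C; src2 C b = tgt2 C a; dom1 C F = cod1 C (src2 C a)\<rbrakk> \<Longrightarrow>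
   wl C F (vcmp C b a) = vcmp C (wl C F b) (wl C F a)"
  unfolding wl_def using interchange[of a b "id2 C F" "id2 C F"] by simp

lemma wr_vcmp:
  "\<lbrakk>F \<in> arr1 C; a \<in> arr2 C; b \<in> arr2 C; src2 C b = tgt2 C a; dom1 C (src2 C a) = cod1 C F\<rbrakk> \<Longrightarrow>
   wr C (vcmp C b a) F = vcmp C (wr C b F) (wr C a F)"
  unfolding wr_def using interchange[of "id2 C F" "id2 C F" a b] by simp

lemma wl_wl:
  "\<lbrakk>F \<in> arr1 C; G \<in> arr1 C; a \<in> arr2 C; dom1 C F = cod1 C G; dom1 C G = cod1 C (src2 C a)\<rbrakk> \<Longrightarrow>
   wl C F (wl C G a) = wl C (cmp C F G) a"
  unfolding wl_def using hcmp_assoc[of a "id2 C G" "id2 C F"] hcmp_id2[of G F] by simp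

lemma wr_wr:
  "\<lbrakk>F \<in> arr1 C; G \<in> arr1 C; a \<in> arr2 C; dom1 C G = cod1 C F; dom1 C (src2 C a) = cod1 C G\<rbrakk> \<Longrightarrow>
   wr C (wr C a G) F = wr C a (cmp C G F)"
  unfolding wr_def using hcmp_assoc[of "id2 C F" "id2 C G" a] hcmp_id2[of F G] by simp

lemma wl_wr:
  "\<lbrakk>F \<in> arr1 C; G \<in> arr1 C; a \<in> arr2 C; dom1 C F = cod1 C (src2 C a); dom1 C (src2 C a) = cod1 C G\<rbrakk> \<Longrightarrow>
   wl C F (wr C a G) = wr C (wl C F a) G"
  unfolding wl_def wr_def using hcmp_assoc[of "id2 C G" a "id2 C F"] by simp

lemma wl_id2 [simp]:
  "\<lbrakk>F \<in> arr1 C; g \<in> arr1 C; dom1 C F = cod1 C g\<rbrakk> \<Longrightarrow> wl C F (id2 C g) = id2 C (cmp C F g)"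
  unfolding wl_def by (simp add: hcmp_id2)

lemma wr_id2 [simp]:
  "\<lbrakk>F \<in> arr1 C; g \<in> arr1 C; dom1 C g = cod1 C F\<rbrakk> \<Longrightarrow> wr C (id2 C g) F = id2 C (cmp C g F)"
  unfolding wr_def by (simp add: hcmp_id2)

lemma wl_idn [simp]: "\<lbrakk>a \<in> arr2 C; y = cod1 C (src2 C a)\<rbrakk> \<Longrightarrow> wl C (idn C y) a = a"
  unfolding wl_def using hcmp_id2_idn by simp

lemma wr_idn [simp]: "\<lbrakk>a \<in> arr2 C; x = dom1 C (src2 C a)\<rbrakk> \<Longrightarrow> wr C a (idn C x) = a"
  unfolding wr_def using hcmp_id2_idn by simp

lemma whisker_exchange:
  assumes "a \<in> arr2 C" "b \<in> arr2 C" "dom1 C (src2 C b) = cod1 C (src2 C a)"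
  shows "vcmp C (wr C b (tgt2 C a)) (wl C (src2 C b) a) = vcmp C (wl C (tgt2 C b) a) (wr C b (src2 C a))"
proof -
  have "vcmp C (wr C b (tgt2 C a)) (wl C (src2 C b) a)
      = hcmp C (vcmp C b (id2 C (src2 C b))) (vcmp C (id2 C (tgt2 C a)) a)"
    using assms unfolding wl_def wr_def by (subst interchange) simp_all
  also have "\<dots> = hcmp C (vcmp C (id2 C (tgt2 C b)) b) (vcmp C a (id2 C (src2 C a)))"
    using assms by simp
  also have "\<dots> = vcmp C (wl C (tgt2 C b) a) (wr C b (src2 C a))"
    using assms unfolding wl_def wr_def by (subst interchange) simp_all
  finally show ?thesis .
qed

lemma monad2_free_ialg:
  assumes "monad2 C X S m s"
  shows "ialg C X S m s S m"
  using assms unfolding monad2_def ialg_def hom1_def hom2_def by auto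

lemma ialg_wr:
  assumes S: "monad2 C X S m s" and M: "ialg C X S m s M \<mu>"
    and A: "A \<in> arr1 C" "cod1 C A = dom1 C M"
  shows "ialg C X S m s (cmp C M A) (wr C \<mu> A)"
proof -
  have ty: "X \<in> obs C" "S \<in> arr1 C" "dom1 C S = X" "cod1 C S = X"
    "m \<in> arr2 C" "src2 C m = cmp C S S" "tgt2 C m = S"
    "s \<in> arr2 C" "src2 C s = idn C X" "tgt2 C s = S"
    "M \<in> arr1 C" "cod1 C M = X" "\<mu> \<in> arr2 C" "src2 C \<mu> = cmp C S M" "tgt2 C \<mu> = M"
    using S M unfolding monad2_def ialg_def hom1_def hom2_def by auto
  have unit: "vcmp C \<mu> (wr C s M) = id2 C M"
    and assoc: "vcmp C \<mu> (wl C S \<mu>) = vcmp C \<mu> (wr C m M)"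
    using M unfolding ialg_def by auto
  have "vcmp C (wr C \<mu> A) (wr C s (cmp C M A)) = wr C (vcmp C \<mu> (wr C s M)) A"
    using ty A by (simp add: wr_wr[symmetric] wr_vcmp)
  moreover have "vcmp C (wr C \<mu> A) (wl C S (wr C \<mu> A)) = wr C (vcmp C \<mu> (wl C S \<mu>)) A"
    using ty A by (simp add: wl_wr wr_vcmp)
  moreover have "vcmp C (wr C \<mu> A) (wr C m (cmp C M A)) = wr C (vcmp C \<mu> (wr C m M)) A"
    using ty A by (simp add: wr_wr[symmetric] wr_vcmp)
  ultimately show ?thesis
    using ty A unit assoc unfolding ialg_def hom2_def by simp
qed

end

locale relative_monad_lifting = two_cat C
  for C :: "('o,'a,'c,'e) twocat_scheme" +
  fixes X0 X :: 'o and I T S S0 :: 'a and ext :: "'a \<Rightarrow> 'a \<Rightarrow> 'c \<Rightarrow> 'c"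
    and t m s m0 s0 :: 'c and hatT :: "'a \<Rightarrow> 'c \<Rightarrow> 'c"
  assumes relative_monad: "relative_monad C X0 X I T ext t"
    and compatible_monad: "compatible_monad C X0 X I S m s S0 m0 s0"
    and lifting: "lifting C X0 X I T ext t S m s S0 m0 s0 hatT"
begin

lemma monads: "monad2 C X S m s" "monad2 C X0 S0 m0 s0"
  using compatible_monad unfolding compatible_monad_def by auto

lemma structure_hom [simp]:
  "X0 \<in> obs C" "X \<in> obs C"
  "I \<in> arr1 C" "dom1 C I = X0" "cod1 C I = X"
  "T \<in> arr1 C" "dom1 C T = X0" "cod1 C T = X"
  "t \<in> arr2 C" "src2 C t = I" "tgt2 C t = T"
  "S \<in> arr1 C" "dom1 C S = X" "cod1 C S = X"
  "m \<in> arr2 C" "src2 C m = cmp C S S" "tgt2 C m = S"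
  "s \<in> arr2 C" "src2 C s = idn C X" "tgt2 C s = S"
  "S0 \<in> arr1 C" "dom1 C S0 = X0" "cod1 C S0 = X0"
  "m0 \<in> arr2 C" "src2 C m0 = cmp C S0 S0" "tgt2 C m0 = S0"
  "s0 \<in> arr2 C" "src2 C s0 = idn C X0" "tgt2 C s0 = S0"
  using relative_monad monads unfolding relative_monad_def monad2_def hom1_def hom2_def by auto

lemma S_I: "cmp C S I = cmp C I S0"
  and m_I: "wr C m I = wl C I m0"
  and s_I: "wr C s I = wl C I s0"
  using compatible_monad unfolding compatible_monad_def by auto

lemma S_I_cmp [simp]: "\<lbrakk>A \<in> arr1 C; cod1 C A = X0\<rbrakk> \<Longrightarrow> cmp C S (cmp C I A) = cmp C I (cmp C S0 A)"
  using S_I by (metis cmp_assoc structure_hom)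

lemma m0_unit_right: "vcmp C m0 (wr C s0 S0) = id2 C S0"
  and m0_unit_left: "vcmp C m0 (wl C S0 s0) = id2 C S0"
  using monads(2) unfolding monad2_def by auto

lemma ext_hom2:
  "\<lbrakk>hom1 C A K X0; hom1 C B K X0; hom2 C f (cmp C I A) (cmp C T B)\<rbrakk> \<Longrightarrow>
   hom2 C (ext A B f) (cmp C T A) (cmp C T B)"
  using relative_monad unfolding relative_monad_def by meson

lemma ext_natural_dom:
  "\<lbrakk>hom1 C A K X0; hom1 C A' K X0; hom1 C B K X0; hom2 C f (cmp C I A) (cmp C T B); hom2 C a A' A\<rbrakk> \<Longrightarrow>
   ext A' B (vcmp C f (wl C I a)) = vcmp C (ext A B f) (wl C T a)"
  using relative_monad unfolding relative_monad_def by meson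

lemma ext_natural_cod:
  "\<lbrakk>hom1 C A K X0; hom1 C B K X0; hom1 C B' K X0; hom2 C f (cmp C I A) (cmp C T B); hom2 C b B B'\<rbrakk> \<Longrightarrow>
   ext A B' (vcmp C (wl C T b) f) = vcmp C (wl C T b) (ext A B f)"
  using relative_monad unfolding relative_monad_def by meson

lemma hatT_ialg:
  "ialg C X0 S0 m0 s0 M \<mu> \<Longrightarrow> ialg C X S m s (cmp C T M) (hatT M \<mu>)"
  using lifting unfolding lifting_def by blast

lemma hatT_morphism:
  "\<lbrakk>ialg C X0 S0 m0 s0 M \<mu>; ialg C X0 S0 m0 s0 N \<nu>; dom1 C M = dom1 C N; hom2 C f M N;
    vcmp C f \<mu> = vcmp C \<nu> (wl C S0 f)\<rbrakk> \<Longrightarrow>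
   vcmp C (wl C T f) (hatT M \<mu>) = vcmp C (hatT N \<nu>) (wl C S (wl C T f))"
  using lifting unfolding lifting_def by blast

lemma hatT_wr:
  "\<lbrakk>ialg C X0 S0 m0 s0 M \<mu>; hom1 C A K (dom1 C M)\<rbrakk> \<Longrightarrow>
   hatT (cmp C M A) (wr C \<mu> A) = wr C (hatT M \<mu>) A"
  using lifting unfolding lifting_def by blast

lemma hatT_ext:
  "\<lbrakk>ialg C X0 S0 m0 s0 M \<mu>; ialg C X0 S0 m0 s0 N \<nu>; dom1 C M = dom1 C N;
    hom2 C f (cmp C I M) (cmp C T N); vcmp C f (wl C I \<mu>) = vcmp C (hatT N \<nu>) (wl C S f)\<rbrakk> \<Longrightarrow>
   vcmp C (ext M N f) (hatT M \<mu>) = vcmp C (hatT N \<nu>) (wl C S (ext M N f))"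
  using lifting unfolding lifting_def by blast

lemma hatT_unit:
  "ialg C X0 S0 m0 s0 M \<mu> \<Longrightarrow> vcmp C (wr C t M) (wl C I \<mu>) = vcmp C (hatT M \<mu>) (wl C S (wr C t M))"
  using lifting unfolding lifting_def by blast

lemma free_ialg: "ialg C X0 S0 m0 s0 S0 m0"
  using monad2_free_ialg[OF monads(2)] .

lemma free_ialg_wr:
  "\<lbrakk>A \<in> arr1 C; cod1 C A = X0\<rbrakk> \<Longrightarrow> ialg C X0 S0 m0 s0 (cmp C S0 A) (wr C m0 A)"
  using ialg_wr[OF monads(2) free_ialg] by simp

abbreviation m0_hat :: 'c where "m0_hat \<equiv> hatT S0 m0"

lemma m0_hat_ialg: "ialg C X S m s (cmp C T S0) m0_hat"
  using hatT_ialg[OF free_ialg] .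

lemma m0_hat_hom2 [simp]:
  "m0_hat \<in> arr2 C" "src2 C m0_hat = cmp C S (cmp C T S0)" "tgt2 C m0_hat = cmp C T S0"
  using m0_hat_ialg unfolding ialg_def hom2_def by auto

lemma m0_hat_unit: "vcmp C m0_hat (wr C s (cmp C T S0)) = id2 C (cmp C T S0)"
  and m0_hat_assoc: "vcmp C m0_hat (wl C S m0_hat) = vcmp C m0_hat (wr C m (cmp C T S0))"
  using m0_hat_ialg unfolding ialg_def by auto

lemma m0_hat_wr: "\<lbrakk>A \<in> arr1 C; cod1 C A = X0\<rbrakk> \<Longrightarrow> wr C m0_hat A = hatT (cmp C S0 A) (wr C m0 A)"
  using hatT_wr[OF free_ialg, of A] unfolding hom1_def by simp

lemma hatT_free_hom2 [simp]:
  assumes "A \<in> arr1 C" "cod1 C A = X0"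
  shows "hatT (cmp C S0 A) (wr C m0 A) \<in> arr2 C"
    "src2 C (hatT (cmp C S0 A) (wr C m0 A)) = cmp C S (cmp C T (cmp C S0 A))"
    "tgt2 C (hatT (cmp C S0 A) (wr C m0 A)) = cmp C T (cmp C S0 A)"
  using assms by (simp_all flip: m0_hat_wr)

definition d :: 'c where "d = vcmp C m0_hat (wl C (cmp C S T) s0)"

lemma d_eq: "d = vcmp C m0_hat (wl C S (wl C T s0))"
  unfolding d_def by (simp add: wl_wl)

lemma d_hom2 [simp]: "d \<in> arr2 C" "src2 C d = cmp C S T" "tgt2 C d = cmp C T S0"
  unfolding d_def by simp_all

lemma d_wr:
  "\<lbrakk>A \<in> arr1 C; cod1 C A = X0\<rbrakk> \<Longrightarrow>
   wr C d A = vcmp C (hatT (cmp C S0 A) (wr C m0 A)) (wl C S (wl C T (wr C s0 A)))"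
  unfolding d_eq by (simp add: wr_vcmp wl_wr m0_hat_wr)

lemma d_unit: "vcmp C d (wr C s T) = wl C T s0"
proof -
  have "vcmp C d (wr C s T) = vcmp C m0_hat (vcmp C (wl C S (wl C T s0)) (wr C s T))"
    unfolding d_eq by (simp add: vcmp_assoc)
  also have "\<dots> = vcmp C m0_hat (vcmp C (wr C s (cmp C T S0)) (wl C T s0))"
    using whisker_exchange[of "wl C T s0" s] by simp
  also have "\<dots> = wl C T s0"
    by (simp add: m0_hat_unit flip: vcmp_assoc)
  finally show ?thesis .
qed

lemma d_eta: "vcmp C d (wl C S t) = wr C t S0"
proof -
  have "vcmp C d (wl C S t) = vcmp C m0_hat (wl C S (vcmp C (wl C T s0) t))"
    unfolding d_eq by (simp add: vcmp_assoc wl_vcmp)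
  also have "\<dots> = vcmp C m0_hat (wl C S (vcmp C (wr C t S0) (wl C I s0)))"
    using whisker_exchange[of s0 t] by simp
  also have "\<dots> = vcmp C (vcmp C m0_hat (wl C S (wr C t S0))) (wl C I (wl C S0 s0))"
    using S_I by (simp add: wl_vcmp vcmp_assoc wl_wl)
  also have "\<dots> = vcmp C (vcmp C (wr C t S0) (wl C I m0)) (wl C I (wl C S0 s0))"
    unfolding hatT_unit[OF free_ialg] ..
  also have "\<dots> = vcmp C (wr C t S0) (wl C I (vcmp C m0 (wl C S0 s0)))"
    by (simp add: vcmp_assoc wl_vcmp)
  also have "\<dots> = wr C t S0"
    by (simp add: m0_unit_left)
  finally show ?thesis .
qed

lemma d_mult_T: "vcmp C d (wr C m T) = vcmp C m0_hat (wl C S d)"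
proof -
  have "vcmp C d (wr C m T) = vcmp C m0_hat (vcmp C (wl C S (wl C T s0)) (wr C m T))"
    unfolding d_eq by (simp add: vcmp_assoc)
  also have "\<dots> = vcmp C (vcmp C m0_hat (wr C m (cmp C T S0))) (wl C (cmp C S S) (wl C T s0))"
    using whisker_exchange[of "wl C T s0" m] by (simp add: vcmp_assoc)
  also have "\<dots> = vcmp C (vcmp C m0_hat (wl C S m0_hat)) (wl C S (wl C S (wl C T s0)))"
    by (simp add: m0_hat_assoc wl_wl)
  also have "\<dots> = vcmp C m0_hat (wl C S d)"
    unfolding d_eq by (simp add: vcmp_assoc wl_vcmp)
  finally show ?thesis .
qed

lemma d_mult: "vcmp C d (wr C m T) = vcmp C (wl C T m0) (vcmp C (wr C d S0) (wl C S d))"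
proof -
  have m0_hat_m0: "vcmp C (wl C T m0) (wr C m0_hat S0) = vcmp C m0_hat (wl C S (wl C T m0))"
    using hatT_morphism[OF free_ialg_wr[of S0] free_ialg, of m0] monads(2)
    unfolding monad2_def hom2_def by (simp add: m0_hat_wr)
  have "vcmp C (wl C T m0) (vcmp C (wr C d S0) (wl C S d))
      = vcmp C (vcmp C (wl C T m0) (wr C m0_hat S0))
          (vcmp C (wl C S (wl C T (wr C s0 S0))) (wl C S d))"
    unfolding d_eq by (simp add: vcmp_assoc wr_vcmp wl_wr)
  also have "\<dots> = vcmp C m0_hat (vcmp C (wl C S (wl C T (vcmp C m0 (wr C s0 S0)))) (wl C S d))"
    unfolding m0_hat_m0 by (simp add: vcmp_assoc wl_vcmp)
  also have "\<dots> = vcmp C d (wr C m T)"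
    by (simp add: m0_unit_right d_mult_T)
  finally show ?thesis ..
qed

context
  fixes K :: 'o and A B :: 'a and f :: 'c
  assumes A: "hom1 C A K X0" and B: "hom1 C B K X0" and f: "hom2 C f (cmp C I A) (cmp C T B)"
begin

lemma span_hom [simp]:
  "A \<in> arr1 C" "dom1 C A = K" "cod1 C A = X0" "B \<in> arr1 C" "dom1 C B = K" "cod1 C B = X0"
  "f \<in> arr2 C" "src2 C f = cmp C I A" "tgt2 C f = cmp C T B"
  using A B f unfolding hom1_def hom2_def by auto

lemma d_transport_unit:
  "vcmp C (vcmp C (wr C d B) (wl C S f)) (wl C I (wr C s0 A)) = vcmp C (wl C T (wr C s0 B)) f"
proof -
  have "wl C I (wr C s0 A) = wr C s (cmp C I A)"
    by (simp add: wl_wr wr_wr flip: s_I)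
  then have "vcmp C (vcmp C (wr C d B) (wl C S f)) (wl C I (wr C s0 A))
      = vcmp C (wr C d B) (vcmp C (wr C s (cmp C T B)) f)"
    using whisker_exchange[of f s] by (simp add: vcmp_assoc)
  also have "\<dots> = vcmp C (wr C (vcmp C d (wr C s T)) B) f"
    by (simp add: wr_vcmp wr_wr vcmp_assoc)
  finally show ?thesis
    by (simp add: d_unit wl_wr)
qed

lemma d_transport_ialg_map:
  "vcmp C (vcmp C (wr C d B) (wl C S f)) (wl C I (wr C m0 A))
   = vcmp C (hatT (cmp C S0 B) (wr C m0 B)) (wl C S (vcmp C (wr C d B) (wl C S f)))"
proof -
  have "wl C I (wr C m0 A) = wr C m (cmp C I A)"
    by (simp add: wl_wr wr_wr flip: m_I)
  then have "vcmp C (vcmp C (wr C d B) (wl C S f)) (wl C I (wr C m0 A))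
      = vcmp C (wr C d B) (vcmp C (wr C m (cmp C T B)) (wl C (cmp C S S) f))"
    using whisker_exchange[of f m] by (simp add: vcmp_assoc)
  also have "\<dots> = vcmp C (wr C (vcmp C d (wr C m T)) B) (wl C S (wl C S f))"
    by (simp add: wr_vcmp wr_wr wl_wl vcmp_assoc)
  also have "\<dots> = vcmp C (wr C m0_hat B) (vcmp C (wl C S (wr C d B)) (wl C S (wl C S f)))"
    by (simp add: d_mult_T wr_vcmp wl_wr vcmp_assoc)
  finally show ?thesis
    by (simp add: m0_hat_wr wl_vcmp)
qed

lemma d_ext:
  "vcmp C (wr C d B) (wl C S (ext A B f))
   = vcmp C (ext (cmp C S0 A) (cmp C S0 B) (vcmp C (wr C d B) (wl C S f))) (wr C d A)"
proof -
  define g where "g = vcmp C (wr C d B) (wl C S f)"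
  have S0_span: "hom1 C (cmp C S0 A) K X0" "hom1 C (cmp C S0 B) K X0"
    unfolding hom1_def by simp_all
  have s0_hom: "hom2 C (wr C s0 A) A (cmp C S0 A)" "hom2 C (wr C s0 B) B (cmp C S0 B)"
    unfolding hom2_def by simp_all
  have g_hom: "hom2 C g (cmp C I (cmp C S0 A)) (cmp C T (cmp C S0 B))"
    unfolding g_def hom2_def by simp
  have ext_f: "ext A B f \<in> arr2 C" "src2 C (ext A B f) = cmp C T A" "tgt2 C (ext A B f) = cmp C T B"
    using ext_hom2[OF A B f] unfolding hom2_def by auto
  have ext_g: "ext (cmp C S0 A) (cmp C S0 B) g \<in> arr2 C"
    "src2 C (ext (cmp C S0 A) (cmp C S0 B) g) = cmp C T (cmp C S0 A)"
    "tgt2 C (ext (cmp C S0 A) (cmp C S0 B) g) = cmp C T (cmp C S0 B)"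
    using ext_hom2[OF S0_span g_hom] unfolding hom2_def by auto
  have lifted: "vcmp C (ext (cmp C S0 A) (cmp C S0 B) g) (hatT (cmp C S0 A) (wr C m0 A))
      = vcmp C (hatT (cmp C S0 B) (wr C m0 B)) (wl C S (ext (cmp C S0 A) (cmp C S0 B) g))"
    using hatT_ext[OF free_ialg_wr free_ialg_wr _ g_hom] d_transport_ialg_map unfolding g_def
    by simp
  have "vcmp C (wr C d B) (wl C S (ext A B f))
      = vcmp C (hatT (cmp C S0 B) (wr C m0 B))
          (wl C S (ext A (cmp C S0 B) (vcmp C (wl C T (wr C s0 B)) f)))"
    using ext_f by (simp add: d_wr ext_natural_cod[OF A B S0_span(2) f s0_hom(2)] vcmp_assoc wl_vcmp)
  also have "\<dots> = vcmp C (hatT (cmp C S0 B) (wr C m0 B))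
      (wl C S (vcmp C (ext (cmp C S0 A) (cmp C S0 B) g) (wl C T (wr C s0 A))))"
    by (simp add: d_transport_unit[folded g_def]
        flip: ext_natural_dom[OF S0_span(1) A S0_span(2) g_hom s0_hom(1)])
  also have "\<dots> = vcmp C (ext (cmp C S0 A) (cmp C S0 B) g) (wr C d A)"
    using ext_g by (simp add: d_wr wl_vcmp lifted flip: vcmp_assoc)
  finally show ?thesis
    unfolding g_def .
qed

end

lemma d_rel_distributive_law: "rel_distributive_law C X0 X I T ext t S m s S0 m0 s0 d"
  unfolding rel_distributive_law_def using d_mult d_unit d_ext d_eta by (simp add: hom2_def[of C d])

end

theorem mainTheorem11:
  fixes C :: "('o, 'a, 'c) twocat"
  assumes "two_category C"
    and "relative_monad C X0 X I T ext t"
    and "compatible_monad C X0 X I S m s S0 m0 s0"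
    and "lifting C X0 X I T ext t S m s S0 m0 s0 hatT"
  shows "rel_distributive_law C X0 X I T ext t S m s S0 m0 s0
           (vcmp C (hatT S0 m0) (wl C (cmp C S T) s0))"
proof -
  interpret relative_monad_lifting C X0 X I T S S0 ext t m s m0 s0 hatT
    using assms by unfold_locales
  show ?thesis
    using d_rel_distributive_law unfolding d_def .
qed

end
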